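(* Let $A\subseteq\mathbb{R}^d$ be a rational affine subspace containing some point $\vec{x}\in\mathbb{N}^d$. Then there exists a constant $c>0$ such that for every $p^*\in\mathbb{N}_+$ and every $\vec{y}\in\{\vec{x}+p^*\vec{z}:\vec{z}\in\mathbb{Z}^d\}$ with $\vec{y}\notin A$, the Euclidean distance satisfies $\mathrm{dist}(\vec{y},A)\ge c\,p^*$.
   Context: A rational affine subspace of $\mathbb{R}^d$ is the solution set of a finite system of linear equations $\vec{a}\cdot\vec{z}=b$ with $\vec{a}\in\mathbb{Q}^d$, $b\in\mathbb{Q}$. *)

theory Defs
  imports "HOL-Analysis.Analysis"
begin

definition rational_affine_subspace :: "(real^'n) set \<Rightarrow> bool" where
  "rational_affine_subspace A \<longleftrightarrow>
     (\<exists>E :: ((real^'n) \<times> real) set. finite E \<and>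
        (\<forall>(a, b)\<in>E. (\<forall>i. a $ i \<in> \<rat>) \<and> b \<in> \<rat>) \<and>
        A = {z. \<forall>(a, b)\<in>E. a \<bullet> z = b})"

end

theory Submission
  imports Defs
begin

text \<open>Clearing denominators, an equation \<open>a \<bullet> z = b\<close> with rational coefficients takes
  values in \<open>(1/D) \<int>\<close> at integer points. If \<open>y = x + p z\<close> violates it while \<open>x\<close> satisfies it,
  then \<open>a \<bullet> (y - x) = p (a \<bullet> z)\<close> is a nonzero multiple of \<open>p/D\<close>, so by Cauchy-Schwarz every
  point of the hyperplane is at distance at least \<open>p / (D |a|)\<close> from \<open>y\<close>. Taking the least of
  these constants over the finitely many defining equations gives the theorem.\<close>

lemma Rats_common_denominator:
  fixes f :: "'a \<Rightarrow> real"
  assumes "finite S" and "\<forall>i\<in>S. f i \<in> \<rat>"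
  shows "\<exists>D::nat. D > 0 \<and> (\<forall>i\<in>S. real D * f i \<in> \<int>)"
  using assms
proof (induction S rule: finite_induct)
  case empty
  show ?case by (rule exI[of _ 1]) simp
next
  case (insert j S)
  then obtain D :: nat where D: "D > 0" "\<forall>i\<in>S. real D * f i \<in> \<int>"
    by auto
  have "f j \<in> \<rat>" using insert.prems by simp
  then obtain m :: int and n :: nat where n: "n > 0" "f j = of_int m / of_nat n"
  proof (rule Rats_cases')
    fix a b :: int
    assume "b > 0" "f j = of_int a / of_int b"
    then show thesis using that[of "nat b" a] by simp
  qed
  have "real (D * n) * f i \<in> \<int>" if "i \<in> insert j S" for i
  proof (cases "i = j")
    case True
    then have "real (D * n) * f i = of_int (int D * m)" using n by simp
    then show ?thesis by (metis Ints_of_int)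
  next
    case False
    then have "real (D * n) * f i = real n * (real D * f i)" by simp
    then show ?thesis using D False that by (metis Ints_mult Ints_of_nat insertE)
  qed
  then show ?case using D n by (intro exI[of _ "D * n"]) simp
qed

lemma rational_inner_integer_vector_denominator:
  fixes a :: "real^'n"
  assumes "\<forall>i. a $ i \<in> \<rat>"
  obtains D :: nat where "D > 0"
    and "\<And>z::real^'n. (\<forall>i. z $ i \<in> \<int>) \<Longrightarrow> real D * (a \<bullet> z) \<in> \<int>"
proof -
  obtain D :: nat where D: "D > 0" "\<forall>i\<in>UNIV. real D * a $ i \<in> \<int>"
    using Rats_common_denominator[of UNIV "\<lambda>i. a $ i"] assms by auto
  have "real D * (a \<bullet> z) \<in> \<int>" if z: "\<forall>i. z $ i \<in> \<int>" for z :: "real^'n"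
  proof -
    have "real D * (a \<bullet> z) = (\<Sum>i\<in>UNIV. (real D * a $ i) * z $ i)"
      by (simp add: inner_vec_def sum_distrib_left mult.assoc)
    also have "\<dots> \<in> \<int>"
      using D z by (intro Ints_sum) (metis Ints_mult)
    finally show ?thesis .
  qed
  with D show thesis using that by blast
qed

lemma rational_hyperplane_lattice_distance:
  fixes a x :: "real^'n"
  assumes "\<forall>i. a $ i \<in> \<rat>"
  shows "\<exists>c>0. \<forall>(p::nat) z w. (\<forall>i. z $ i \<in> \<int>) \<longrightarrow> a \<bullet> z \<noteq> 0 \<longrightarrow> a \<bullet> w = a \<bullet> x \<longrightarrow>
           c * real p \<le> dist (x + real p *\<^sub>R z) w"
proof -
  obtain D :: nat where D: "D > 0"
    and D_int: "\<And>z::real^'n. (\<forall>i. z $ i \<in> \<int>) \<Longrightarrow> real D * (a \<bullet> z) \<in> \<int>"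
    using rational_inner_integer_vector_denominator assms by blast
  define K where "K = real D * (norm a + 1)"
  have K: "K > 0" using D by (simp add: K_def add_nonneg_pos)
  have "real p \<le> K * dist (x + real p *\<^sub>R z) w"
    if z: "\<forall>i. z $ i \<in> \<int>" and az: "a \<bullet> z \<noteq> 0" and aw: "a \<bullet> w = a \<bullet> x"
    for p :: nat and z w
  proof -
    have "1 \<le> \<bar>real D * (a \<bullet> z)\<bar>"
      using D_int[OF z] D az by (intro Ints_nonzero_abs_ge1) auto
    then have "real p * 1 \<le> real p * (real D * \<bar>a \<bullet> z\<bar>)"
      by (intro mult_left_mono) (auto simp: abs_mult)
    then have "real p \<le> real D * (real p * \<bar>a \<bullet> z\<bar>)"
      by (simp add: mult.left_commute)
    also have "real p * \<bar>a \<bullet> z\<bar> = \<bar>a \<bullet> (x + real p *\<^sub>R z - w)\<bar>"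
      using aw by (simp add: inner_diff_right inner_add_right abs_mult)
    also have "\<dots> \<le> norm a * dist (x + real p *\<^sub>R z) w"
      by (simp add: dist_norm Cauchy_Schwarz_ineq2)
    also have "\<dots> \<le> (norm a + 1) * dist (x + real p *\<^sub>R z) w"
      by (simp add: mult_right_mono)
    finally show ?thesis
      using D by (simp add: K_def mult_left_mono mult.assoc)
  qed
  with K show ?thesis
    by (intro exI[of _ "1 / K"]) (auto simp: field_simps)
qed

lemma rational_hyperplanes_uniform_lattice_distance:
  fixes x :: "real^'n"
  assumes "finite S" and "\<forall>a\<in>S. \<forall>i. a $ i \<in> \<rat>"
  obtains c where "c > 0"
    and "\<And>a p z w. a \<in> S \<Longrightarrow> \<forall>i. z $ i \<in> \<int> \<Longrightarrow> a \<bullet> z \<noteq> 0 \<Longrightarrow> a \<bullet> w = a \<bullet> x \<Longrightarrow>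
           c * real p \<le> dist (x + real p *\<^sub>R z) w"
proof -
  have "\<forall>a\<in>S. \<exists>c>0. \<forall>(p::nat) z w. (\<forall>i. z $ i \<in> \<int>) \<longrightarrow> a \<bullet> z \<noteq> 0 \<longrightarrow>
      a \<bullet> w = a \<bullet> x \<longrightarrow> c * real p \<le> dist (x + real p *\<^sub>R z) w"
    using assms(2) rational_hyperplane_lattice_distance by blast
  then obtain ca where ca_pos: "\<And>a. a \<in> S \<Longrightarrow> ca a > 0"
    and ca_bound: "\<And>a p z w. a \<in> S \<Longrightarrow> \<forall>i. z $ i \<in> \<int> \<Longrightarrow> a \<bullet> z \<noteq> 0 \<Longrightarrow>
      a \<bullet> w = a \<bullet> x \<Longrightarrow> ca a * real p \<le> dist (x + real p *\<^sub>R z) w"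
    by metis
  define c where "c = Min (insert 1 (ca ` S))"
  have "c > 0"
    using assms(1) ca_pos by (simp add: c_def)
  moreover have "c * real p \<le> dist (x + real p *\<^sub>R z) w"
    if "a \<in> S" "\<forall>i. z $ i \<in> \<int>" "a \<bullet> z \<noteq> 0" "a \<bullet> w = a \<bullet> x" for a p z w
  proof -
    have "c * real p \<le> ca a * real p"
      using assms(1) that(1) by (intro mult_right_mono) (simp_all add: c_def)
    also have "\<dots> \<le> dist (x + real p *\<^sub>R z) w"
      using ca_bound[OF that] .
    finally show ?thesis .
  qed
  ultimately show thesis by (rule that)
qed

theorem lemma29:
  fixes A :: "(real^'n) set" and x :: "real^'n"
  assumes "rational_affine_subspace A"
    and "x \<in> A"
    and "\<forall>i. x $ i \<in> \<nat>"
  shows "\<exists>c > 0. \<forall>p :: nat. p \<ge> 1 \<longrightarrow>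
           (\<forall>z :: real^'n. (\<forall>i. z $ i \<in> \<int>) \<longrightarrow>
              x + real p *\<^sub>R z \<notin> A \<longrightarrow>
              infdist (x + real p *\<^sub>R z) A \<ge> c * real p)"
proof -
  obtain E :: "((real^'n) \<times> real) set" where E: "finite E"
    "\<forall>(a, b)\<in>E. (\<forall>i. a $ i \<in> \<rat>) \<and> b \<in> \<rat>" and A: "A = {z. \<forall>(a, b)\<in>E. a \<bullet> z = b}"
    using assms(1) unfolding rational_affine_subspace_def by blast
  have "\<forall>a\<in>fst ` E. \<forall>i. a $ i \<in> \<rat>" using E(2) by auto
  then obtain c where c: "c > 0" and c_bound: "\<And>a p z w. a \<in> fst ` E \<Longrightarrow> \<forall>i. z $ i \<in> \<int> \<Longrightarrow>
      a \<bullet> z \<noteq> 0 \<Longrightarrow> a \<bullet> w = a \<bullet> x \<Longrightarrow> c * real p \<le> dist (x + real p *\<^sub>R z) w"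
    using E(1) rational_hyperplanes_uniform_lattice_distance[of "fst ` E"] by blast
  have "c * real p \<le> infdist (x + real p *\<^sub>R z) A"
    if z: "\<forall>i. z $ i \<in> \<int>" and y: "x + real p *\<^sub>R z \<notin> A" for p :: nat and z
  proof -
    obtain a b where ab: "(a, b) \<in> E" and violated: "a \<bullet> (x + real p *\<^sub>R z) \<noteq> b"
      using y A by auto
    have ax: "a \<bullet> x = b" using assms(2) A ab by auto
    with violated have az: "a \<bullet> z \<noteq> 0" by (auto simp: inner_add_right)
    have a: "a \<in> fst ` E" using ab by force
    have "c * real p \<le> dist (x + real p *\<^sub>R z) w" if "w \<in> A" for w
    proof -
      have "a \<bullet> w = a \<bullet> x" using that A ab ax by auto
      then show ?thesis by (rule c_bound[OF a z az])
    qed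
    moreover have "A \<noteq> {}" using assms(2) by auto
    ultimately show ?thesis
      by (simp add: infdist_notempty cINF_greatest)
  qed
  with c show ?thesis by blast
qed

end
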